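(* Consider the Postdoc secretary problem with $n$ candidates in which, if the candidate accepted at the $k$-th interview is the overall second best candidate, the payoff is $1-k/n$, and otherwise (including accepting nobody) the payoff is $0$. Then there exist integers $0\le r(n)\le s(n)\le n$ such that the following strategy maximizes the expected payoff among all strategies: reject the first $r(n)$ interviewed candidates; for interviews $k$ with $r(n)<k\le s(n)$, accept the first candidate which is better than all the preceding ones; after the $s(n)$-th interview, accept the first candidate which is either the best or the second best among the candidates interviewed so far.
   Context: Setting (secretary-type problem): $n$ candidates have distinct qualities (a strict total order) and are interviewed one at a time in uniformly random order (all $n!$ orders equally likely). After the $k$-th interview, the interviewer knows only the relative ranks of the first $k$ candidates among themselves and must immediately and irrevocably either accept the $k$-th candidate (stopping the process) or reject it; rejected candidates cannot be recalled. A strategy is a rule making this decision at each step using only the relative ranks observed so far (it may accept nobody). *)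

theory Defs
  imports Complex_Main
begin

text \<open>Candidates have qualities 0,...,n-1 (larger = better).  An interview order is a
  list xs that is a permutation of [0..<n]; xs ! (k-1) is the quality of the k-th
  interviewed candidate.\<close>

definition orders :: "nat \<Rightarrow> nat list set" where
  "orders n = {xs. distinct xs \<and> set xs = {0..<n}}"

text \<open>Relative ranks of a prefix: each entry is the number of prefix members below it.
  This is exactly the information about the relative order of the observed candidates.\<close>

definition rel_pattern :: "nat list \<Rightarrow> nat list" where
  "rel_pattern ys = map (\<lambda>y. card {z \<in> set ys. z < y}) ys"

text \<open>A (deterministic) strategy: after the k-th interview it sees the relative-rank
  pattern of the first k candidates (a list of length k) and answers True = accept.\<close>

type_synonym strategy = "nat list \<Rightarrow> bool"

definition stop_time :: "strategy \<Rightarrow> nat list \<Rightarrow> nat option" where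
  "stop_time S xs =
     (if \<exists>k. 1 \<le> k \<and> k \<le> length xs \<and> S (rel_pattern (take k xs))
      then Some (LEAST k. 1 \<le> k \<and> k \<le> length xs \<and> S (rel_pattern (take k xs)))
      else None)"

text \<open>Payoff: accepting at interview k the overall second best candidate (exactly one
  candidate is better) gives 1 - k/n; anything else (incl. accepting nobody) gives 0.\<close>

definition postdoc_payoff :: "nat \<Rightarrow> strategy \<Rightarrow> nat list \<Rightarrow> real" where
  "postdoc_payoff n S xs =
     (case stop_time S xs of
        None \<Rightarrow> 0
      | Some k \<Rightarrow> (if card {j. j < n \<and> xs ! j > xs ! (k - 1)} = 1
                   then 1 - real k / real n else 0))"

definition expected_payoff :: "nat \<Rightarrow> strategy \<Rightarrow> real" where
  "expected_payoff n S = (\<Sum>xs\<in>orders n. postdoc_payoff n S xs) / fact n"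

text \<open>The threshold strategy: with k = length p and c = number of earlier candidates worse
  than the current one, the current candidate is best so far iff c + 1 = k, and best or
  second best so far iff c + 2 \<ge> k.\<close>

definition threshold_strategy :: "nat \<Rightarrow> nat \<Rightarrow> strategy" where
  "threshold_strategy r s p =
     (let k = length p; c = p ! (k - 1) in
        (r < k \<and> k \<le> s \<and> c + 1 = k) \<or> (s < k \<and> c + 2 \<ge> k))"

end

theory Submission
  imports Defs "HOL-Combinatorics.Multiset_Permutations"
begin

text \<open>Backward induction. Given that the first m candidates were rejected, the relative rank of
  candidate m + 1 is uniform on {0..m} and independent of the pattern seen so far, and accepting
  at interview k a candidate of relative rank c earns in expectation accept_gain n k c, which
  vanishes unless the candidate is best or second best so far. So the optimal value opt_value
  satisfies the usual Bellman recursion; the potential "payoff collected so far plus opt_value of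
  the remaining game" never increases along the interviews, hence no strategy beats
  opt_value n 0, and a strategy attains it as soon as each of its decisions maximises
  accept_gain against opt_value. To see that the threshold strategy makes such decisions,
  opt_value is compared with the value value_top2 of accepting the first candidate that is best or
  second best so far and with the value value_top1 of accepting only a best so far up to
  interview s: the differences deciding the two comparisons change sign at most once, which
  yields the thresholds s and r \<le> s.\<close>

section \<open>Relative ranks\<close>

definition rank_in :: "nat set \<Rightarrow> nat \<Rightarrow> nat" where
  "rank_in A a = card {z \<in> A. z < a}"

lemma rel_pattern_eq_map_rank_in: "rel_pattern ys = map (rank_in (set ys)) ys"
  by (simp add: rel_pattern_def rank_in_def)

lemma rank_in_less:
  assumes "finite A" "a \<in> A" "a < b"
  shows "rank_in A a < rank_in A b"
proof -
  have "{z \<in> A. z < a} \<subset> {z \<in> A. z < b}" using assms by auto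
  then show ?thesis unfolding rank_in_def by (intro psubset_card_mono) (use assms in auto)
qed

lemma rank_in_mono: "finite A \<Longrightarrow> a \<le> b \<Longrightarrow> rank_in A a \<le> rank_in A b"
  unfolding rank_in_def by (intro card_mono) auto

lemma rank_in_less_card:
  assumes "finite A" "a \<in> A"
  shows "rank_in A a < card A"
proof -
  have "{z \<in> A. z < a} \<subset> A" using assms by auto
  then show ?thesis unfolding rank_in_def using assms psubset_card_mono by blast
qed

lemma strict_mono_on_rank_in: "finite A \<Longrightarrow> strict_mono_on A (rank_in A)"
  by (auto intro!: strict_mono_onI rank_in_less)

lemma bij_betw_rank_in:
  assumes "finite A"
  shows "bij_betw (rank_in A) A {0..<card A}"
proof -
  have inj: "inj_on (rank_in A) A"
    using strict_mono_on_rank_in[OF assms] strict_mono_on_imp_inj_on by blast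
  moreover have "rank_in A ` A \<subseteq> {0..<card A}" using rank_in_less_card assms by auto
  moreover have "card (rank_in A ` A) = card {0..<card A}" using card_image[OF inj] by simp
  ultimately show ?thesis
    by (simp add: bij_betw_def card_subset_eq)
qed

lemma rank_in_image:
  assumes "finite A" "strict_mono_on A f" "a \<in> A"
  shows "rank_in (f ` A) (f a) = rank_in A a"
proof -
  have inj: "inj_on f A" using assms strict_mono_on_imp_inj_on by blast
  have "f z < f a \<longleftrightarrow> z < a" if "z \<in> A" for z
    using strict_mono_onD[OF assms(2) that assms(3)] strict_mono_onD[OF assms(2) assms(3) that]
    by (cases z a rule: linorder_cases) auto
  then have "{z \<in> f ` A. z < f a} = f ` {z \<in> A. z < a}" by auto
  moreover have "card (f ` {z \<in> A. z < a}) = card {z \<in> A. z < a}"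
    by (rule card_image) (use inj in \<open>auto intro: inj_on_subset\<close>)
  ultimately show ?thesis unfolding rank_in_def by simp
qed

lemma rel_pattern_map_strict_mono:
  "strict_mono_on (set ys) f \<Longrightarrow> rel_pattern (map f ys) = rel_pattern ys"
  unfolding rel_pattern_eq_map_rank_in using rank_in_image by simp

lemma length_orders: "p \<in> orders m \<Longrightarrow> length p = m"
  unfolding orders_def using distinct_card by fastforce

lemma rel_pattern_in_orders:
  assumes "distinct ys"
  shows "rel_pattern ys \<in> orders (length ys)"
proof -
  have "bij_betw (rank_in (set ys)) (set ys) {0..<length ys}"
    using bij_betw_rank_in[of "set ys"] assms by (simp add: distinct_card)
  then show ?thesis
    unfolding orders_def rel_pattern_eq_map_rank_in
    using assms by (simp add: distinct_map bij_betw_def)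
qed

lemma rel_pattern_orders:
  assumes "p \<in> orders m"
  shows "rel_pattern p = p"
proof -
  have "set p = {0..<m}" using assms unfolding orders_def by simp
  moreover have "rank_in {0..<m} x = x" if "x < m" for x
  proof -
    have "{z \<in> {0..<m}. z < x} = {0..<x}" using that by auto
    then show ?thesis by (simp add: rank_in_def)
  qed
  ultimately show ?thesis unfolding rel_pattern_eq_map_rank_in by (intro map_idI) auto
qed

lemma rel_pattern_take_rel_pattern:
  assumes "distinct ys"
  shows "rel_pattern (take j (rel_pattern ys)) = rel_pattern (take j ys)"
proof -
  have "strict_mono_on (set (take j ys)) (rank_in (set ys))"
    by (rule monotone_on_subset[OF strict_mono_on_rank_in set_take_subset]) simp
  then show ?thesis
    unfolding rel_pattern_eq_map_rank_in[of ys] take_map by (rule rel_pattern_map_strict_mono)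
qed

text \<open>extend_pattern p c is the pattern of a prefix with pattern p followed by a candidate of
  relative rank c among it.\<close>

definition lift_above :: "nat \<Rightarrow> nat \<Rightarrow> nat" where
  "lift_above c y = (if c \<le> y then Suc y else y)"

definition extend_pattern :: "nat list \<Rightarrow> nat \<Rightarrow> nat list" where
  "extend_pattern p c = map (lift_above c) p @ [c]"

lemma strict_mono_on_lift_above: "strict_mono_on A (lift_above c)"
  by (auto intro!: strict_mono_onI simp: lift_above_def)

lemma rel_pattern_snoc:
  assumes "distinct (ys @ [y])"
  shows "rel_pattern (ys @ [y]) = extend_pattern (rel_pattern ys) (rank_in (set ys) y)"
proof -
  let ?A = "set ys"
  have y: "y \<notin> ?A" using assms by simp
  have "rank_in (insert y ?A) y = rank_in ?A y"
    unfolding rank_in_def by (rule arg_cong[where f = card]) auto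
  moreover have "rank_in (insert y ?A) z = lift_above (rank_in ?A y) (rank_in ?A z)"
    if z: "z \<in> ?A" for z
  proof (cases "y < z")
    case True
    then have "{w \<in> insert y ?A. w < z} = insert y {w \<in> ?A. w < z}" by auto
    then show ?thesis
      using True y rank_in_mono[of ?A y z] by (simp add: rank_in_def lift_above_def)
  next
    case False
    then have "z < y" using z y by (metis linorder_neq_iff)
    then have "{w \<in> insert y ?A. w < z} = {w \<in> ?A. w < z}" by auto
    then show ?thesis
      using rank_in_less[OF _ z \<open>z < y\<close>] by (simp add: rank_in_def lift_above_def)
  qed
  ultimately show ?thesis
    unfolding rel_pattern_eq_map_rank_in extend_pattern_def by simp
qed

lemma extend_pattern_in_orders:
  assumes "p \<in> orders m" "c \<le> m"
  shows "extend_pattern p c \<in> orders (Suc m)"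
proof -
  have d: "distinct p" and s: "set p = {0..<m}" using assms unfolding orders_def by auto
  have inj: "inj_on (lift_above c) (set p)"
    using strict_mono_on_lift_above strict_mono_on_imp_inj_on by blast
  have "lift_above c ` {0..<m} = {0..<Suc m} - {c}"
  proof (intro set_eqI iffI)
    fix x assume "x \<in> {0..<Suc m} - {c}"
    then have "x = lift_above c (if x < c then x else x - 1)" "(if x < c then x else x - 1) < m"
      using assms(2) by (auto simp: lift_above_def)
    then show "x \<in> lift_above c ` {0..<m}" by auto
  qed (auto simp: lift_above_def)
  then show ?thesis
    unfolding orders_def extend_pattern_def using d s inj assms(2) by (auto simp: distinct_map)
qed

lemma take_extend_pattern:
  "i \<le> length p \<Longrightarrow> take i (extend_pattern p c) = map (lift_above c) (take i p)"
  by (simp add: extend_pattern_def take_map)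

lemma rel_pattern_take_extend_pattern:
  "p \<in> orders m \<Longrightarrow> rel_pattern (take m (extend_pattern p c)) = p"
  using take_extend_pattern[of m p c] length_orders[of p m]
    rel_pattern_map_strict_mono[OF strict_mono_on_lift_above] rel_pattern_orders[of p m]
  by simp

lemma last_extend_pattern: "last (extend_pattern p c) = c"
  by (simp add: extend_pattern_def)

lemma orders_Suc_decompose:
  assumes "q \<in> orders (Suc m)"
  shows "q = extend_pattern (rel_pattern (take m q)) (last q)"
    and "rel_pattern (take m q) \<in> orders m" and "last q \<le> m"
proof -
  have l: "length q = Suc m" using length_orders[OF assms] .
  then obtain t v where q: "q = t @ [v]" by (cases q rule: rev_exhaust) auto
  have t: "take m q = t" "last q = v" using q l by auto
  have d: "distinct (t @ [v])" and s: "insert v (set t) = {0..<Suc m}"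
    using assms unfolding orders_def q by auto
  then have st: "set t = {0..<Suc m} - {v}" and "v \<le> m" by auto
  then show "last q \<le> m" unfolding t by simp
  have "{z \<in> set t. z < v} = {0..<v}" unfolding st using \<open>v \<le> m\<close> by auto
  then have "rank_in (set t) v = v" by (simp add: rank_in_def)
  then have "rel_pattern q = extend_pattern (rel_pattern t) v"
    using rel_pattern_snoc[OF d] unfolding q by simp
  then show "q = extend_pattern (rel_pattern (take m q)) (last q)"
    unfolding t rel_pattern_orders[OF assms] .
  show "rel_pattern (take m q) \<in> orders m"
    using rel_pattern_in_orders[of t] d l unfolding t q by simp
qed

lemma inj_on_extend_pattern: "inj_on (\<lambda>(p, c). extend_pattern p c) (orders m \<times> UNIV)"
proof (rule inj_onI, clarsimp)
  fix p c p' c'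
  assume "p \<in> orders m" "p' \<in> orders m" "extend_pattern p c = extend_pattern p' c'"
  then show "p = p' \<and> c = c'"
    by (metis rel_pattern_take_extend_pattern last_extend_pattern)
qed

lemma orders_Suc_eq_image:
  "orders (Suc m) = (\<lambda>(p, c). extend_pattern p c) ` (orders m \<times> {..m})"
proof
  show "orders (Suc m) \<subseteq> (\<lambda>(p, c). extend_pattern p c) ` (orders m \<times> {..m})"
  proof
    fix q assume "q \<in> orders (Suc m)"
    from orders_Suc_decompose[OF this] show "q \<in> (\<lambda>(p, c). extend_pattern p c) ` (orders m \<times> {..m})"
      by (auto intro!: image_eqI[where x = "(rel_pattern (take m q), last q)"])
  qed
qed (use extend_pattern_in_orders in auto)

lemma orders_eq_permutations_of_set: "orders n = permutations_of_set {0..<n}"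
  unfolding orders_def permutations_of_set_def by auto

lemma finite_orders: "finite (orders n)"
  by (simp add: orders_eq_permutations_of_set)

lemma card_orders: "card (orders n) = fact n"
  by (simp add: orders_eq_permutations_of_set)

lemma sum_orders_Suc:
  "(\<Sum>q \<in> orders (Suc m). F q) = (\<Sum>p \<in> orders m. \<Sum>c \<le> m. F (extend_pattern p c))"
proof -
  have "inj_on (\<lambda>(p, c). extend_pattern p c) (orders m \<times> {..m})"
    by (rule inj_on_subset[OF inj_on_extend_pattern]) auto
  then show ?thesis
    unfolding orders_Suc_eq_image
    by (simp add: sum.reindex sum.cartesian_product split_def finite_orders)
qed

section \<open>Interview orders with a given prefix pattern\<close>

definition with_prefix :: "nat \<Rightarrow> nat list \<Rightarrow> nat list set" where
  "with_prefix n q = {xs \<in> orders n. rel_pattern (take (length q) xs) = q}"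

definition subsets :: "nat \<Rightarrow> nat \<Rightarrow> nat set set" where
  "subsets n m = {A. A \<subseteq> {0..<n} \<and> card A = m}"

definition element_of_rank :: "nat set \<Rightarrow> nat \<Rightarrow> nat" where
  "element_of_rank A = the_inv_into A (rank_in A)"

definition arrange :: "nat set \<Rightarrow> nat list \<Rightarrow> nat list" where
  "arrange A q = map (element_of_rank A) q"

lemma finite_subsets: "finite (subsets n m)"
  unfolding subsets_def by (rule finite_subset[of _ "Pow {0..<n}"]) auto

lemma card_subsets: "card (subsets n m) = n choose m"
  unfolding subsets_def using n_subsets[of "{0..<n}" m] by simp

lemma subsets_imp_finite: "A \<in> subsets n m \<Longrightarrow> finite A"
  unfolding subsets_def using finite_subset by blast

lemma element_of_rank_rank_in: "finite A \<Longrightarrow> a \<in> A \<Longrightarrow> element_of_rank A (rank_in A a) = a"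
  unfolding element_of_rank_def
  using the_inv_into_f_f strict_mono_on_imp_inj_on[OF strict_mono_on_rank_in] by metis

lemma
  assumes "finite A" "j < card A"
  shows element_of_rank_in: "element_of_rank A j \<in> A"
    and rank_in_element_of_rank: "rank_in A (element_of_rank A j) = j"
proof -
  have b: "bij_betw (rank_in A) A {0..<card A}" using bij_betw_rank_in[OF assms(1)] .
  show "element_of_rank A j \<in> A"
    unfolding element_of_rank_def using bij_betw_the_inv_into[OF b] assms(2) by (auto dest: bij_betwE)
  show "rank_in A (element_of_rank A j) = j"
    unfolding element_of_rank_def using f_the_inv_into_f_bij_betw[OF b] assms(2) by auto
qed

lemma
  assumes "A \<in> subsets n m" "q \<in> orders m"
  shows distinct_arrange: "distinct (arrange A q)"
    and set_arrange: "set (arrange A q) = A"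
    and length_arrange: "length (arrange A q) = m"
    and rel_pattern_arrange: "rel_pattern (arrange A q) = q"
proof -
  have fin: "finite A" using subsets_imp_finite[OF assms(1)] .
  have cA: "card A = m" using assms(1) unfolding subsets_def by simp
  have "bij_betw (the_inv_into A (rank_in A)) {0..<card A} A"
    by (rule bij_betw_the_inv_into[OF bij_betw_rank_in[OF fin]])
  then have bi: "bij_betw (element_of_rank A) {0..<m} A"
    unfolding element_of_rank_def cA .
  have dq: "distinct q" and sq: "set q = {0..<m}" using assms(2) unfolding orders_def by auto
  show "distinct (arrange A q)" unfolding arrange_def using dq bi sq
    by (simp add: distinct_map bij_betw_imp_inj_on)
  show sa: "set (arrange A q) = A" unfolding arrange_def using bi sq
    by (simp add: bij_betw_imp_surj_on)
  show "length (arrange A q) = m" unfolding arrange_def using length_orders[OF assms(2)] by simp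
  have "map (rank_in A) (arrange A q) = q"
    unfolding arrange_def map_map
  proof (rule map_idI)
    fix x assume "x \<in> set q"
    then have "x < card A" using sq cA by simp
    then show "(rank_in A \<circ> element_of_rank A) x = x" using rank_in_element_of_rank[OF fin] by simp
  qed
  then show "rel_pattern (arrange A q) = q"
    unfolding rel_pattern_eq_map_rank_in sa .
qed

lemma arrange_append_in_with_prefix:
  assumes A: "A \<in> subsets n m" and q: "q \<in> orders m"
    and ys: "ys \<in> permutations_of_set ({0..<n} - A)"
  shows "arrange A q @ ys \<in> with_prefix n q"
proof -
  have "distinct ys" and sys: "set ys = {0..<n} - A" using ys permutations_of_setD by auto
  then have "distinct (arrange A q @ ys)"
    using distinct_arrange[OF A q] set_arrange[OF A q] by simp
  moreover have "set (arrange A q @ ys) = {0..<n}"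
    using set_arrange[OF A q] sys A unfolding subsets_def by auto
  moreover have "take (length q) (arrange A q @ ys) = arrange A q"
    using length_arrange[OF A q] length_orders[OF q] by simp
  ultimately show ?thesis
    unfolding with_prefix_def orders_def using rel_pattern_arrange[OF A q] by simp
qed

lemma arrange_set_take:
  assumes "xs \<in> with_prefix n q"
  shows "arrange (set (take (length q) xs)) q = take (length q) xs"
proof -
  define m where "m = length q"
  let ?A = "set (take m xs)"
  have q: "q = rel_pattern (take m xs)" using assms by (simp add: with_prefix_def m_def)
  have "arrange ?A q = map (element_of_rank ?A \<circ> rank_in ?A) (take m xs)"
    unfolding arrange_def q rel_pattern_eq_map_rank_in by simp
  also have "\<dots> = take m xs" by (rule map_idI) (simp add: element_of_rank_rank_in)
  finally show ?thesis unfolding m_def .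
qed

lemma
  assumes "xs \<in> orders n" "m \<le> n"
  shows set_take_in_subsets: "set (take m xs) \<in> subsets n m"
    and drop_in_permutations: "drop m xs \<in> permutations_of_set ({0..<n} - set (take m xs))"
proof -
  have d: "distinct xs" and s: "set xs = {0..<n}" and l: "length xs = n"
    using assms(1) length_orders unfolding orders_def by auto
  show "set (take m xs) \<in> subsets n m"
    unfolding subsets_def using d l s assms(2) set_take_subset[of m xs] by (simp add: distinct_card)
  show "drop m xs \<in> permutations_of_set ({0..<n} - set (take m xs))"
  proof (rule permutations_of_setI)
    have "set (take m xs) \<inter> set (drop m xs) = {}"
      using set_take_disj_set_drop_if_distinct[OF d, of m m] by simp
    moreover have "set (take m xs) \<union> set (drop m xs) = {0..<n}"
      using s by (metis set_append append_take_drop_id)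
    ultimately show "set (drop m xs) = {0..<n} - set (take m xs)" by blast
  qed (use d in simp)
qed

lemma bij_betw_with_prefix:
  assumes "q \<in> orders m" "m \<le> n"
  shows "bij_betw (\<lambda>(A, ys). arrange A q @ ys)
           (SIGMA A : subsets n m. permutations_of_set ({0..<n} - A)) (with_prefix n q)"
proof -
  have lq: "length q = m" using length_orders[OF assms(1)] .
  have "(set (take m (arrange A q @ ys)), drop m (arrange A q @ ys)) = (A, ys)"
    if "A \<in> subsets n m" for A ys
    using set_arrange[OF that assms(1)] length_arrange[OF that assms(1)] by simp
  moreover have "xs \<in> orders n" "arrange (set (take m xs)) q @ drop m xs = xs"
    if "xs \<in> with_prefix n q" for xs
    using that arrange_set_take[OF that] lq unfolding with_prefix_def by auto
  ultimately show ?thesis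
    using arrange_append_in_with_prefix[OF _ assms(1)] set_take_in_subsets[OF _ assms(2)]
      drop_in_permutations[OF _ assms(2)]
    by (intro bij_betw_byWitness[where f' = "\<lambda>xs. (set (take m xs), drop m xs)"])
      (auto simp del: take_append drop_append)
qed

lemma sum_with_prefix:
  assumes "q \<in> orders m" "m \<le> n"
  shows "(\<Sum>xs \<in> with_prefix n q. h xs) =
           (\<Sum>A \<in> subsets n m. \<Sum>ys \<in> permutations_of_set ({0..<n} - A). h (arrange A q @ ys))"
  using sum.reindex_bij_betw[OF bij_betw_with_prefix[OF assms], of h]
  by (simp add: sum.Sigma finite_subsets split_def)

lemma card_permutations_complement:
  "A \<in> subsets n m \<Longrightarrow> card (permutations_of_set ({0..<n} - A)) = fact (n - m)"
  unfolding subsets_def by (auto simp: card_Diff_subset finite_subset)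

lemma card_with_prefix:
  assumes "q \<in> orders m" "m \<le> n"
  shows "real (card (with_prefix n q)) = fact n / fact m"
proof -
  have "card (with_prefix n q) = (\<Sum>A \<in> subsets n m. fact (n - m))"
    using sum_with_prefix[OF assms, of "\<lambda>_. 1 :: nat"]
    by (simp add: card_permutations_complement del: card_permutations_of_set)
  also have "\<dots> = (n choose m) * fact (n - m)" by (simp add: card_subsets)
  finally have "real (card (with_prefix n q)) = real (n choose m) * fact (n - m)" by simp
  moreover have "fact m * fact (n - m) * real (n choose m) = fact n"
    using binomial_fact_lemma[OF assms(2)] by (metis of_nat_fact of_nat_mult)
  ultimately show ?thesis by (simp add: field_simps)
qed

lemma sum_orders_by_prefix:
  assumes "k \<le> n"
  shows "(\<Sum>xs \<in> orders n. h xs) = (\<Sum>q \<in> orders k. \<Sum>xs \<in> with_prefix n q. h xs)"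
proof -
  have "rel_pattern (take k xs) \<in> orders k" if "xs \<in> orders n" for xs
    using rel_pattern_in_orders[of "take k xs"] length_orders[OF that] that assms
    unfolding orders_def by simp
  then have "(\<lambda>xs. rel_pattern (take k xs)) ` orders n \<subseteq> orders k" by blast
  then have "(\<Sum>xs \<in> orders n. h xs) =
      (\<Sum>q \<in> orders k. sum h {xs \<in> orders n. rel_pattern (take k xs) = q})"
    by (rule sum.group[symmetric, OF finite_orders finite_orders])
  also have "\<dots> = (\<Sum>q \<in> orders k. \<Sum>xs \<in> with_prefix n q. h xs)"
    by (rule sum.cong) (auto simp: with_prefix_def length_orders)
  finally show ?thesis .
qed

section \<open>The payoff of accepting a candidate\<close>

text \<open>Expected payoff of accepting at interview k of n a candidate that is best (resp. second
  best) so far: the probability that it is the overall second best, k(n-k)/(n(n-1))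
  (resp. k(k-1)/(n(n-1))), times the payoff 1 - k/n.\<close>

definition gain_if_best :: "nat \<Rightarrow> nat \<Rightarrow> real" where
  "gain_if_best n k = real k * (real n - real k)^2 / ((real n)^2 * (real n - 1))"

definition gain_if_second :: "nat \<Rightarrow> nat \<Rightarrow> real" where
  "gain_if_second n k = real k * (real k - 1) * (real n - real k) / ((real n)^2 * (real n - 1))"

definition accept_gain :: "nat \<Rightarrow> nat \<Rightarrow> nat \<Rightarrow> real" where
  "accept_gain n k c =
     (if Suc c = k then gain_if_best n k else if Suc (Suc c) = k then gain_if_second n k else 0)"

definition stop_payoff :: "nat \<Rightarrow> nat \<Rightarrow> nat list \<Rightarrow> real" where
  "stop_payoff n k xs = (if xs ! (k - 1) + 2 = n then 1 - real k / real n else 0)"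

lemma card_better_eq_1_iff:
  assumes xs: "xs \<in> orders n" and k: "1 \<le> k" "k \<le> n"
  shows "card {j. j < n \<and> xs ! j > xs ! (k - 1)} = 1 \<longleftrightarrow> xs ! (k - 1) + 2 = n"
proof -
  have d: "distinct xs" and s: "set xs = {0..<n}" and l: "length xs = n"
    using xs length_orders[OF xs] unfolding orders_def by auto
  let ?v = "xs ! (k - 1)"
  have "?v < n" using k l s nth_mem[of "k - 1" xs] by auto
  have inj: "inj_on (nth xs) {j. j < n \<and> xs ! j > ?v}" using d l by (intro inj_on_nth) auto
  have img: "nth xs ` {j. j < n \<and> xs ! j > ?v} = {Suc ?v..<n}"
  proof
    show "nth xs ` {j. j < n \<and> xs ! j > ?v} \<subseteq> {Suc ?v..<n}" using s l nth_mem by fastforce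
    show "{Suc ?v..<n} \<subseteq> nth xs ` {j. j < n \<and> xs ! j > ?v}"
    proof
      fix w assume w: "w \<in> {Suc ?v..<n}"
      then have "w \<in> set xs" using s by simp
      then obtain j where "j < length xs" "xs ! j = w" by (auto simp: in_set_conv_nth)
      then show "w \<in> nth xs ` {j. j < n \<and> xs ! j > ?v}" using w l by auto
    qed
  qed
  have "card {j. j < n \<and> xs ! j > ?v} = n - Suc ?v"
    using card_image[OF inj] unfolding img by simp
  then show ?thesis using \<open>?v < n\<close> by auto
qed

lemma union_top_in_subsets:
  assumes "C \<in> subsets N (m - card B)" "B \<subseteq> {N..<N + j}" "card B \<le> m"
  shows "C \<union> B \<in> subsets (N + j) m"
proof -
  have C: "C \<subseteq> {0..<N}" "card C = m - card B" using assms(1) unfolding subsets_def by auto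
  have "C \<inter> B = {}" using C(1) assms(2) by (force simp: subset_iff)
  then have "card (C \<union> B) = card C + card B"
    using finite_subset[OF assms(2)] finite_subset[OF C(1)] by (intro card_Un_disjoint) auto
  then show ?thesis using C assms(2,3) unfolding subsets_def by auto
qed

lemma low_part_in_subsets:
  assumes "A \<in> subsets (N + j) m" "A \<inter> {N..<N + j} = B"
  shows "A \<inter> {0..<N} \<in> subsets N (m - card B)"
proof -
  have sub: "A \<subseteq> {0..<N + j}" and cA: "card A = m" using assms(1) unfolding subsets_def by auto
  have "A \<inter> {0..<N} \<union> B = A" "(A \<inter> {0..<N}) \<inter> B = {}" using sub assms(2) by auto
  moreover have "finite A" "finite B" using finite_subset[OF sub] assms(2) by auto
  ultimately have "card (A \<inter> {0..<N}) + card B = card A"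
    using card_Un_disjoint[of "A \<inter> {0..<N}" B] by simp
  then show ?thesis unfolding subsets_def using cA by auto
qed

lemma card_subsets_with_top:
  assumes "B \<subseteq> {N..<N + j}" "card B \<le> m"
  shows "card {A \<in> subsets (N + j) m. A \<inter> {N..<N + j} = B} = N choose (m - card B)"
proof -
  have into: "C \<union> B \<in> subsets (N + j) m" "(C \<union> B) \<inter> {N..<N + j} = B" "(C \<union> B) \<inter> {0..<N} = C"
    if "C \<in> subsets N (m - card B)" for C
    using union_top_in_subsets[OF that assms] that assms(1) unfolding subsets_def by auto
  have restrict: "A \<inter> {0..<N} \<in> subsets N (m - card B)" "A \<inter> {0..<N} \<union> B = A"
    if "A \<in> subsets (N + j) m" "A \<inter> {N..<N + j} = B" for A
    using low_part_in_subsets[OF that] that unfolding subsets_def by auto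
  have "bij_betw (\<lambda>C. C \<union> B) (subsets N (m - card B)) {A \<in> subsets (N + j) m. A \<inter> {N..<N + j} = B}"
  proof (rule bij_betw_byWitness[where f' = "\<lambda>A. A \<inter> {0..<N}"])
    show "\<forall>C \<in> subsets N (m - card B). (C \<union> B) \<inter> {0..<N} = C" using into(3) by blast
    show "\<forall>A \<in> {A \<in> subsets (N + j) m. A \<inter> {N..<N + j} = B}. A \<inter> {0..<N} \<union> B = A"
      using restrict(2) by blast
    show "(\<lambda>C. C \<union> B) ` subsets N (m - card B) \<subseteq> {A \<in> subsets (N + j) m. A \<inter> {N..<N + j} = B}"
      using into(1,2) by blast
    show "(\<lambda>A. A \<inter> {0..<N}) ` {A \<in> subsets (N + j) m. A \<inter> {N..<N + j} = B} \<subseteq> subsets N (m - card B)"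
      using restrict(1) by blast
  qed
  then have "card (subsets N (m - card B)) = card {A \<in> subsets (N + j) m. A \<inter> {N..<N + j} = B}"
    by (rule bij_betw_same_card)
  then show ?thesis by (simp add: card_subsets)
qed

lemma rank_in_second_top:
  assumes "A \<subseteq> {0..<Suc (Suc N)}" "N \<in> A"
  shows "rank_in A N = card A - 1 - (if Suc N \<in> A then 1 else 0)"
proof -
  have fA: "finite A" using assms(1) finite_subset by blast
  have "{z \<in> A. z < N} = A - {N, Suc N}" using assms(1) by (auto simp: less_Suc_eq)
  then show ?thesis
    using fA assms(2) by (auto simp: rank_in_def card_Diff_subset)
qed

lemma second_top_at_rank_iff:
  assumes "A \<in> subsets (N + 2) m"
  shows "N \<in> A \<and> rank_in A N = c \<longleftrightarrow>
    Suc c = m \<and> A \<inter> {N..<N + 2} = {N} \<or> Suc (Suc c) = m \<and> A \<inter> {N..<N + 2} = {N, Suc N}"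
proof -
  have sub: "A \<subseteq> {0..<Suc (Suc N)}" and cA: "card A = m" using assms unfolding subsets_def by auto
  have fin: "finite A" using finite_subset[OF sub] by simp
  have top: "{N..<N + 2} = {N, Suc N}" by auto
  consider "N \<notin> A" | "N \<in> A" "Suc N \<notin> A" | "N \<in> A" "Suc N \<in> A" by blast
  then show ?thesis
  proof cases
    case 1
    then have "A \<inter> {N, Suc N} \<noteq> {N}" "A \<inter> {N, Suc N} \<noteq> {N, Suc N}" by auto
    then show ?thesis using 1 unfolding top by simp
  next
    case 2
    then have "A \<inter> {N, Suc N} = {N}" by auto
    moreover have "card {N} \<le> card A" using 2 fin by (intro card_mono) auto
    ultimately show ?thesis using rank_in_second_top[OF sub] 2 cA unfolding top by auto
  next
    case 3
    then have "A \<inter> {N, Suc N} = {N, Suc N}" by auto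
    moreover have "card {N, Suc N} \<le> card A" using 3 fin by (intro card_mono) auto
    ultimately show ?thesis using rank_in_second_top[OF sub] 3 cA unfolding top by auto
  qed
qed

lemma card_subsets_second_top_at_rank:
  "card {A \<in> subsets (N + 2) m. N \<in> A \<and> rank_in A N = c} =
    (if Suc c = m then N choose (m - 1) else if Suc (Suc c) = m then N choose (m - 2) else 0)"
proof -
  have eq: "{A \<in> subsets (N + 2) m. N \<in> A \<and> rank_in A N = c} =
      {A \<in> subsets (N + 2) m. Suc c = m \<and> A \<inter> {N..<N + 2} = {N} \<or>
        Suc (Suc c) = m \<and> A \<inter> {N..<N + 2} = {N, Suc N}}"
    using second_top_at_rank_iff by blast
  consider "Suc c = m" | "Suc (Suc c) = m" | "Suc c \<noteq> m" "Suc (Suc c) \<noteq> m" by blast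
  then show ?thesis
  proof cases
    case 1
    then show ?thesis unfolding eq using card_subsets_with_top[of "{N}" N 2 m] by simp
  next
    case 2
    then show ?thesis unfolding eq using card_subsets_with_top[of "{N, Suc N}" N 2 m]
      by (simp add: numeral_2_eq_2)
  qed (unfold eq, simp)
qed

lemma fact_binomial_ratio:
  assumes "j \<le> N"
  shows "fact (N - j) * real (N choose j) = fact N / fact j"
  using binomial_fact[OF assms] by (simp add: field_simps)

lemma fact_choose_eq_gain_if_best:
  assumes "j \<le> N"
  shows "fact (Suc N - j) * real (N choose j) * (1 - real (Suc j) / real (N + 2)) =
    fact (N + 2) / fact (Suc j) * gain_if_best (N + 2) (Suc j)"
proof -
  define R :: real where "R = fact N / fact j"
  have "fact (Suc N - j) = (real N + 1 - real j) * (fact (N - j) :: real)"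
    using assms by (simp add: Suc_diff_le of_nat_diff)
  then have e1: "fact (Suc N - j) * real (N choose j) = (real N + 1 - real j) * R"
    using fact_binomial_ratio[OF assms] unfolding R_def by (simp only: mult.assoc)
  have "fact (N + 2) = (real N + 2) * (real N + 1) * (fact N :: real)"
    by (simp add: numeral_2_eq_2 algebra_simps)
  moreover have "fact (Suc j) = (real j + 1) * (fact j :: real)" by simp
  ultimately have e2: "fact (N + 2) / fact (Suc j) = (real N + 2) * (real N + 1) / (real j + 1) * R"
    unfolding R_def by (simp only: times_divide_times_eq)
  have "real N + 2 > 0" "real N + 1 > 0" "real j + 1 > 0" by linarith+
  then have "(real N + 1 - real j) * R * (1 - real (Suc j) / real (N + 2)) =
      (real N + 2) * (real N + 1) / (real j + 1) * R *
      (real (Suc j) * (real (N + 2) - real (Suc j))^2 / ((real (N + 2))^2 * (real (N + 2) - 1)))"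
    by (simp add: divide_simps power2_eq_square) (simp add: algebra_simps)
  then show ?thesis unfolding gain_if_best_def e1 e2 .
qed

lemma fact_choose_eq_gain_if_second:
  assumes "j < N"
  shows "fact (N - j) * real (N choose j) * (1 - real (j + 2) / real (N + 2)) =
    fact (N + 2) / fact (j + 2) * gain_if_second (N + 2) (j + 2)"
proof -
  define R :: real where "R = fact N / fact j"
  have e1: "fact (N - j) * real (N choose j) = R"
    using fact_binomial_ratio[of j N] assms unfolding R_def by simp
  have "fact (N + 2) = (real N + 2) * (real N + 1) * (fact N :: real)"
    "fact (j + 2) = (real j + 2) * (real j + 1) * (fact j :: real)"
    by (simp_all add: numeral_2_eq_2 algebra_simps)
  then have e2: "fact (N + 2) / fact (j + 2) = (real N + 2) * (real N + 1) / ((real j + 2) * (real j + 1)) * R"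
    unfolding R_def by (simp only: times_divide_times_eq)
  have "real N + 2 > 0" "real N + 1 > 0" "real j + 1 > 0" "real j + 2 > 0" by linarith+
  then have "R * (1 - real (j + 2) / real (N + 2)) =
      (real N + 2) * (real N + 1) / ((real j + 2) * (real j + 1)) * R *
      (real (j + 2) * (real (j + 2) - 1) * (real (N + 2) - real (j + 2)) / ((real (N + 2))^2 * (real (N + 2) - 1)))"
    by (simp add: divide_simps power2_eq_square) (simp add: algebra_simps)
  then show ?thesis unfolding gain_if_second_def e1 e2 .
qed

lemma stop_payoff_arrange_append:
  assumes A: "A \<in> subsets (N + 2) m" and q: "q \<in> orders m" and m: "1 \<le> m"
  shows "stop_payoff (N + 2) m (arrange A q @ ys) =
    (if N \<in> A \<and> rank_in A N = last q then 1 - real m / real (N + 2) else 0)"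
proof -
  have fA: "finite A" using subsets_imp_finite[OF A] .
  have cA: "card A = m" using A by (simp add: subsets_def)
  have lq: "length q = m" using length_orders[OF q] .
  then have "q \<noteq> []" using m by auto
  then have "last q < m" using q unfolding orders_def by auto
  have c: "last q < m" "q ! (m - 1) = last q"
    using \<open>q \<noteq> []\<close> \<open>last q < m\<close> lq by (simp_all add: last_conv_nth)
  have "(arrange A q @ ys) ! (m - 1) = arrange A q ! (m - 1)"
    using length_arrange[OF A q] m by (simp add: nth_append)
  also have "\<dots> = element_of_rank A (last q)" using c lq m by (simp add: arrange_def)
  finally have nth: "(arrange A q @ ys) ! (m - 1) = element_of_rank A (last q)" .
  have "element_of_rank A (last q) = N \<longleftrightarrow> N \<in> A \<and> rank_in A N = last q"
  proof
    assume "element_of_rank A (last q) = N"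
    then show "N \<in> A \<and> rank_in A N = last q"
      using element_of_rank_in[OF fA] rank_in_element_of_rank[OF fA] c(1) cA by auto
  next
    assume "N \<in> A \<and> rank_in A N = last q"
    then show "element_of_rank A (last q) = N" using element_of_rank_rank_in[OF fA, of N] by simp
  qed
  then show ?thesis unfolding stop_payoff_def nth by simp
qed

lemma sum_with_prefix_stop_payoff:
  assumes q: "q \<in> orders m" and m: "1 \<le> m" "m \<le> n"
  shows "(\<Sum>xs \<in> with_prefix n q. stop_payoff n m xs) = fact n / fact m * accept_gain n m (last q)"
proof (cases "m = n")
  case True
  then have "stop_payoff n m xs = 0" for xs using m by (simp add: stop_payoff_def)
  then show ?thesis using True
    by (simp add: accept_gain_def gain_if_best_def gain_if_second_def)
next
  case False
  define N where "N = n - 2"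
  have n: "n = N + 2" using False m unfolding N_def by simp
  define c where "c = last q"
  have "(\<Sum>xs \<in> with_prefix n q. stop_payoff n m xs) =
      (\<Sum>A \<in> subsets n m. \<Sum>ys \<in> permutations_of_set ({0..<n} - A). stop_payoff n m (arrange A q @ ys))"
    by (rule sum_with_prefix[OF q m(2)])
  also have "\<dots> = (\<Sum>A \<in> subsets n m. fact (n - m) * (if N \<in> A \<and> rank_in A N = c then 1 - real m / real n else 0))"
    using stop_payoff_arrange_append[OF _ q m(1)] unfolding c_def n
    by (intro sum.cong) (simp_all add: card_permutations_complement del: card_permutations_of_set)
  also have "\<dots> = fact (n - m) * real (card {A \<in> subsets n m. N \<in> A \<and> rank_in A N = c}) * (1 - real m / real n)"
    by (simp add: sum_distrib_left[symmetric] sum.If_cases finite_subsets Int_def)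
  also have "\<dots> = fact n / fact m * accept_gain n m c"
  proof -
    consider "m = Suc c" | "m = Suc (Suc c)" | "Suc c \<noteq> m" "Suc (Suc c) \<noteq> m" by blast
    then show ?thesis
    proof cases
      case 1
      have "card {A \<in> subsets n m. N \<in> A \<and> rank_in A N = c} = N choose c"
        "accept_gain n m c = gain_if_best n m" "n - m = Suc N - c" "c \<le> N"
        using 1 False m unfolding n card_subsets_second_top_at_rank accept_gain_def by auto
      then show ?thesis using fact_choose_eq_gain_if_best[of c N] unfolding 1 n by simp
    next
      case 2
      have "card {A \<in> subsets n m. N \<in> A \<and> rank_in A N = c} = N choose c"
        "accept_gain n m c = gain_if_second n m" "n - m = N - c" "c < N"
        using 2 False m unfolding n card_subsets_second_top_at_rank accept_gain_def by auto
      then show ?thesis using fact_choose_eq_gain_if_second[of c N] unfolding 2 n by simp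
    qed (unfold n card_subsets_second_top_at_rank accept_gain_def, simp)
  qed
  finally show ?thesis unfolding c_def .
qed

section \<open>Dynamic programming\<close>

definition backward_induction :: "nat \<Rightarrow> (nat \<Rightarrow> 'a \<Rightarrow> 'a) \<Rightarrow> 'a \<Rightarrow> nat \<Rightarrow> 'a" where
  "backward_induction N F a k = foldr F [Suc k..<Suc N] a"

lemma backward_induction_top: "backward_induction N F a N = a"
  by (simp add: backward_induction_def)

lemma backward_induction_step:
  "k < N \<Longrightarrow> backward_induction N F a k = F (Suc k) (backward_induction N F a (Suc k))"
  by (simp add: backward_induction_def upt_conv_Cons del: upt_Suc)

text \<open>opt_value n m is the optimal expected payoff once the first m candidates have been
  rejected.\<close>

definition opt_value :: "nat \<Rightarrow> nat \<Rightarrow> real" where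
  "opt_value n = backward_induction n (\<lambda>k v. (\<Sum>c<k. max (accept_gain n k c) v) / real k) 0"

lemma opt_value_top: "opt_value n n = 0"
  by (simp add: opt_value_def backward_induction_top)

lemma opt_value_step:
  "m < n \<Longrightarrow> opt_value n m =
     (\<Sum>c \<le> m. max (accept_gain n (Suc m) c) (opt_value n (Suc m))) / real (Suc m)"
  by (simp add: opt_value_def backward_induction_step lessThan_Suc_atMost)

lemma opt_value_nonneg: "m \<le> n \<Longrightarrow> opt_value n m \<ge> 0"
proof (induction m rule: inc_induct)
  case (step m)
  then show ?case by (simp add: opt_value_step sum_nonneg)
qed (simp add: opt_value_top)

definition rejects_first :: "strategy \<Rightarrow> nat \<Rightarrow> nat list \<Rightarrow> bool" where
  "rejects_first S m xs \<longleftrightarrow> (\<forall>i. 1 \<le> i \<and> i \<le> m \<longrightarrow> \<not> S (rel_pattern (take i xs)))"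

lemma rejects_first_Suc:
  "rejects_first S (Suc m) xs \<longleftrightarrow> rejects_first S m xs \<and> \<not> S (rel_pattern (take (Suc m) xs))"
  unfolding rejects_first_def using le_Suc_eq by auto

lemma rejects_first_rel_pattern_take:
  assumes "distinct xs" "m \<le> k"
  shows "rejects_first S m (rel_pattern (take k xs)) = rejects_first S m xs"
proof -
  have "rel_pattern (take i (rel_pattern (take k xs))) = rel_pattern (take i xs)" if "i \<le> m" for i
    using rel_pattern_take_rel_pattern[of "take k xs" i] assms that by (simp add: min_def)
  then show ?thesis unfolding rejects_first_def by auto
qed

lemma rejects_first_extend_pattern:
  assumes "p \<in> orders m" "c \<le> m"
  shows "rejects_first S m (extend_pattern p c) = rejects_first S m p"
  using rejects_first_rel_pattern_take[of "extend_pattern p c" m m S]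
    extend_pattern_in_orders[OF assms] rel_pattern_take_extend_pattern[OF assms(1)]
  unfolding orders_def by simp

definition early_payoff :: "nat \<Rightarrow> strategy \<Rightarrow> nat \<Rightarrow> nat list \<Rightarrow> real" where
  "early_payoff n S m xs = (\<Sum>j \<in> {1..m}.
     if rejects_first S (j - 1) xs \<and> S (rel_pattern (take j xs)) then stop_payoff n j xs else 0)"

lemma postdoc_payoff_eq_early_payoff:
  assumes xs: "xs \<in> orders n"
  shows "postdoc_payoff n S xs = early_payoff n S n xs"
proof (cases "\<exists>k. 1 \<le> k \<and> k \<le> length xs \<and> S (rel_pattern (take k xs))")
  case True
  define k where "k = (LEAST k. 1 \<le> k \<and> k \<le> length xs \<and> S (rel_pattern (take k xs)))"
  have l: "length xs = n" using length_orders[OF xs] .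
  have k: "1 \<le> k" "k \<le> n" "S (rel_pattern (take k xs))"
    using LeastI_ex[OF True] l unfolding k_def by auto
  have before: "\<not> S (rel_pattern (take i xs))" if "1 \<le> i" "i < k" for i
    using not_less_Least[of i "\<lambda>k. 1 \<le> k \<and> k \<le> length xs \<and> S (rel_pattern (take k xs))"] that k l
    unfolding k_def[symmetric] by auto
  have "rejects_first S (j - 1) xs \<and> S (rel_pattern (take j xs)) \<longleftrightarrow> j = k" if "1 \<le> j" for j
  proof
    assume j: "rejects_first S (j - 1) xs \<and> S (rel_pattern (take j xs))"
    then have "\<not> j < k" using before that by blast
    moreover have "\<not> k < j" using j k(1,3) unfolding rejects_first_def by auto
    ultimately show "j = k" by simp
  next
    assume "j = k"
    then show "rejects_first S (j - 1) xs \<and> S (rel_pattern (take j xs))"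
      using before k(3) unfolding rejects_first_def by auto
  qed
  then have "early_payoff n S n xs = (\<Sum>j \<in> {1..n}. if j = k then stop_payoff n j xs else 0)"
    unfolding early_payoff_def by (intro sum.cong) auto
  also have "\<dots> = stop_payoff n k xs" using k by simp
  finally have "early_payoff n S n xs = stop_payoff n k xs" .
  moreover have "stop_time S xs = Some k" unfolding stop_time_def k_def using True by simp
  ultimately show ?thesis
    unfolding postdoc_payoff_def stop_payoff_def using card_better_eq_1_iff[OF xs k(1,2)] by simp
next
  case False
  then have "stop_time S xs = None" unfolding stop_time_def by simp
  moreover have "early_payoff n S n xs = 0"
    unfolding early_payoff_def using False length_orders[OF xs] by (auto intro: sum.neutral)
  ultimately show ?thesis unfolding postdoc_payoff_def by simp
qed

text \<open>n! times the expected payoff of following S during the first m interviews and playing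
  optimally afterwards.\<close>

definition potential :: "nat \<Rightarrow> strategy \<Rightarrow> nat \<Rightarrow> real" where
  "potential n S m = (\<Sum>xs \<in> orders n.
     early_payoff n S m xs + (if rejects_first S m xs then opt_value n m else 0))"

definition step_loss :: "nat \<Rightarrow> strategy \<Rightarrow> nat \<Rightarrow> nat list \<Rightarrow> real" where
  "step_loss n S m q =
     max (accept_gain n (Suc m) (last q)) (opt_value n (Suc m)) -
     (if S q then accept_gain n (Suc m) (last q) else opt_value n (Suc m))"

lemma step_loss_nonneg: "step_loss n S m q \<ge> 0"
  by (simp add: step_loss_def)

lemma potential_0: "potential n S 0 = fact n * opt_value n 0"
  by (simp add: potential_def early_payoff_def rejects_first_def card_orders)

lemma potential_n: "potential n S n = (\<Sum>xs \<in> orders n. postdoc_payoff n S xs)"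
  unfolding potential_def
  by (intro sum.cong) (simp_all add: opt_value_top postdoc_payoff_eq_early_payoff)

lemma sum_with_prefix_continuation:
  assumes q: "q \<in> orders (Suc m)" and "m < n"
  shows "(\<Sum>xs \<in> with_prefix n q. if rejects_first S m xs then
            (if S (rel_pattern (take (Suc m) xs)) then stop_payoff n (Suc m) xs else v) - w else 0) =
         fact n / fact (Suc m) * (if rejects_first S m q then (if S q then accept_gain n (Suc m) (last q) else v) - w else 0)"
proof -
  have lq: "length q = Suc m" using length_orders[OF q] .
  have "rel_pattern (take (Suc m) xs) = q" "rejects_first S m xs = rejects_first S m q"
    if "xs \<in> with_prefix n q" for xs
    using that rejects_first_rel_pattern_take[of xs m "Suc m" S] lq
    unfolding with_prefix_def orders_def by auto
  then have "(\<Sum>xs \<in> with_prefix n q. if rejects_first S m xs then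
            (if S (rel_pattern (take (Suc m) xs)) then stop_payoff n (Suc m) xs else v) - w else 0) =
      (\<Sum>xs \<in> with_prefix n q. if rejects_first S m q then
            (if S q then stop_payoff n (Suc m) xs else v) - w else 0)"
    by (intro sum.cong) auto
  also have "\<dots> = fact n / fact (Suc m) * (if rejects_first S m q then (if S q then accept_gain n (Suc m) (last q) else v) - w else 0)"
  proof -
    have card: "real (card (with_prefix n q)) = fact n / fact (Suc m)"
      using card_with_prefix[OF q] assms by simp
    show ?thesis
    proof (cases "S q")
      case True
      then show ?thesis
        using sum_with_prefix_stop_payoff[OF q] assms card by (simp add: sum_subtractf right_diff_distrib diff_divide_distrib)
    qed (simp add: card)
  qed
  finally show ?thesis .
qed

lemma sum_rejects_first_max:
  assumes "m < n"
  shows "(\<Sum>q \<in> orders (Suc m). if rejects_first S m q then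
            max (accept_gain n (Suc m) (last q)) (opt_value n (Suc m)) else 0) =
         (\<Sum>q \<in> orders (Suc m). if rejects_first S m q then opt_value n m else 0)"
proof -
  have "(\<Sum>q \<in> orders (Suc m). if rejects_first S m q then
            max (accept_gain n (Suc m) (last q)) (opt_value n (Suc m)) else 0) =
      (\<Sum>p \<in> orders m. if rejects_first S m p then
            (\<Sum>c \<le> m. max (accept_gain n (Suc m) c) (opt_value n (Suc m))) else 0)"
    unfolding sum_orders_Suc
    by (intro sum.cong) (simp_all add: rejects_first_extend_pattern last_extend_pattern)
  also have "\<dots> = (\<Sum>p \<in> orders m. \<Sum>c \<le> m. if rejects_first S m (extend_pattern p c) then opt_value n m else 0)"
    using assms by (intro sum.cong) (simp_all add: opt_value_step rejects_first_extend_pattern)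
  also have "\<dots> = (\<Sum>q \<in> orders (Suc m). if rejects_first S m q then opt_value n m else 0)"
    unfolding sum_orders_Suc ..
  finally show ?thesis .
qed

lemma potential_Suc:
  assumes "m < n"
  shows "potential n S m - potential n S (Suc m) =
    fact n / fact (Suc m) * (\<Sum>q \<in> orders (Suc m). if rejects_first S m q then step_loss n S m q else 0)"
proof -
  let ?V = "opt_value n (Suc m)"
  define choice where "choice q = (if S q then accept_gain n (Suc m) (last q) else ?V)" for q
  define best where "best q = max (accept_gain n (Suc m) (last q)) ?V" for q
  have "potential n S (Suc m) - potential n S m = (\<Sum>xs \<in> orders n. if rejects_first S m xs then
      (if S (rel_pattern (take (Suc m) xs)) then stop_payoff n (Suc m) xs else ?V) - opt_value n m else 0)"
    unfolding potential_def sum_subtractf[symmetric]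
    by (intro sum.cong) (auto simp: early_payoff_def rejects_first_Suc)
  also have "\<dots> = (\<Sum>q \<in> orders (Suc m). \<Sum>xs \<in> with_prefix n q. if rejects_first S m xs then
      (if S (rel_pattern (take (Suc m) xs)) then stop_payoff n (Suc m) xs else ?V) - opt_value n m else 0)"
    using assms by (intro sum_orders_by_prefix) simp
  also have "\<dots> = (\<Sum>q \<in> orders (Suc m). fact n / fact (Suc m) *
      (if rejects_first S m q then choice q - opt_value n m else 0))"
    unfolding choice_def using assms by (intro sum.cong refl sum_with_prefix_continuation)
  also have "\<dots> = fact n / fact (Suc m) * (\<Sum>q \<in> orders (Suc m).
      (if rejects_first S m q then choice q else 0) - (if rejects_first S m q then opt_value n m else 0))"
    unfolding sum_distrib_left by (intro sum.cong) auto
  also have "\<dots> = fact n / fact (Suc m) * (\<Sum>q \<in> orders (Suc m).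
      (if rejects_first S m q then choice q else 0) - (if rejects_first S m q then best q else 0))"
    unfolding sum_subtractf sum_rejects_first_max[OF assms, folded best_def, symmetric] ..
  also have "(\<Sum>q \<in> orders (Suc m).
      (if rejects_first S m q then choice q else 0) - (if rejects_first S m q then best q else 0)) =
      - (\<Sum>q \<in> orders (Suc m). if rejects_first S m q then step_loss n S m q else 0)"
    unfolding sum_negf[symmetric] step_loss_def choice_def[symmetric] best_def[symmetric]
    by (intro sum.cong) auto
  finally show ?thesis by simp
qed

lemma potential_telescope:
  "potential n S 0 - potential n S n = (\<Sum>m < n.
     fact n / fact (Suc m) * (\<Sum>q \<in> orders (Suc m). if rejects_first S m q then step_loss n S m q else 0))"
  using sum_lessThan_telescope'[of "potential n S" n] by (simp add: potential_Suc)

theorem expected_payoff_le_opt_value: "expected_payoff n S \<le> opt_value n 0"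
proof -
  have "0 \<le> (\<Sum>m < n. fact n / fact (Suc m) *
      (\<Sum>q \<in> orders (Suc m). if rejects_first S m q then step_loss n S m q else 0))"
    by (intro sum_nonneg mult_nonneg_nonneg) (simp_all add: sum_nonneg step_loss_nonneg)
  then have "potential n S n \<le> potential n S 0" using potential_telescope[of n S] by simp
  then show ?thesis
    unfolding expected_payoff_def potential_n potential_0 by (simp add: divide_le_eq mult.commute)
qed

definition acts_optimally :: "nat \<Rightarrow> strategy \<Rightarrow> bool" where
  "acts_optimally n S \<longleftrightarrow> (\<forall>m < n. \<forall>q \<in> orders (Suc m).
     (if S q then opt_value n (Suc m) \<le> accept_gain n (Suc m) (last q)
      else accept_gain n (Suc m) (last q) \<le> opt_value n (Suc m)))"

theorem expected_payoff_eq_opt_value: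
  assumes "acts_optimally n S"
  shows "expected_payoff n S = opt_value n 0"
proof -
  have "step_loss n S m q = 0" if "m < n" "q \<in> orders (Suc m)" for m q
    using assms that unfolding acts_optimally_def step_loss_def by (auto split: if_splits)
  then have "potential n S n = potential n S 0"
    using potential_telescope[of n S] by (simp add: sum.neutral)
  then show ?thesis unfolding expected_payoff_def potential_n potential_0 by simp
qed

section \<open>The structure of the optimal value\<close>

lemma upward_closed_threshold:
  assumes "1 \<le> lo" "lo \<le> Suc hi"
    and closed: "\<And>k. lo \<le> k \<Longrightarrow> k < hi \<Longrightarrow> P k \<Longrightarrow> P (Suc k)"
  shows "\<exists>t. lo \<le> Suc t \<and> t \<le> hi \<and> (\<forall>k. t < k \<and> k \<le> hi \<longrightarrow> P k) \<and> (\<forall>k. lo \<le> k \<and> k \<le> t \<longrightarrow> \<not> P k)"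
proof -
  define Q where "Q t \<longleftrightarrow> lo \<le> Suc t \<and> (\<forall>k. t < k \<and> k \<le> hi \<longrightarrow> P k)" for t
  have "Q hi" unfolding Q_def using assms(2) by auto
  define t where "t = (LEAST t. Q t)"
  have Qt: "Q t" and "t \<le> hi" unfolding t_def using LeastI[of Q, OF \<open>Q hi\<close>] Least_le[of Q, OF \<open>Q hi\<close>] by auto
  have "\<not> P k" if k: "lo \<le> k" "k \<le> t" for k
  proof
    assume "P k"
    have "P j" if "k \<le> j" "j \<le> hi" for j
      using that
    proof (induction j rule: dec_induct)
      case (step j)
      then show ?case using closed[of j] k by simp
    qed (use \<open>P k\<close> in simp)
    then have "Q (k - 1)" unfolding Q_def using k assms(1) by auto
    then have "t \<le> k - 1" unfolding t_def by (rule Least_le)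
    then show False using k assms(1) by simp
  qed
  then show ?thesis using Qt \<open>t \<le> hi\<close> unfolding Q_def by blast
qed

lemma nonneg_Suc_if_decrease_persists:
  fixes f :: "nat \<Rightarrow> real"
  assumes top: "f hi \<ge> 0"
    and persists: "\<And>j. lo \<le> j \<Longrightarrow> Suc j < hi \<Longrightarrow> f (Suc j) < f j \<Longrightarrow> f (Suc (Suc j)) < f (Suc j)"
    and k: "lo \<le> k" "k < hi" "f k \<ge> 0"
  shows "f (Suc k) \<ge> 0"
proof (cases "f (Suc k) < f k")
  case True
  have decreasing: "f (Suc j) < f j" if "k \<le> j" "j < hi" for j
    using that
  proof (induction j rule: dec_induct)
    case (step j)
    then show ?case using persists[of j] k(1) by simp
  qed (use True in simp)
  have "f hi \<le> f j" if "Suc k \<le> j" "j \<le> hi" for j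
    using that(2,1)
  proof (induction j rule: inc_induct)
    case (step j)
    then show ?case using decreasing[of j] by simp
  qed simp
  then have "f hi \<le> f (Suc k)" using k(2) by simp
  then show ?thesis using top by linarith
qed (use k in simp)

lemma gain_if_best_Suc_diff:
  "gain_if_best n (Suc j) - gain_if_best n j =
     ((real n - real j - 1)^2 - real j * (2 * (real n - real j - 1) + 1)) / ((real n)^2 * (real n - 1))"
  unfolding gain_if_best_def diff_divide_distrib[symmetric]
  by (simp add: algebra_simps power2_eq_square)

lemma gain_if_best_decrease_persists:
  assumes "Suc (Suc j) \<le> n" "gain_if_best n (Suc j) < gain_if_best n j"
  shows "gain_if_best n (Suc (Suc j)) < gain_if_best n (Suc j)"
proof -
  define x where "x = real n - real j - 1"
  have x: "1 \<le> x" using assms(1) unfolding x_def by simp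
  have D: "(real n)^2 * (real n - 1) > 0" using assms(1) by simp
  have "(x^2 - real j * (2 * x + 1)) / ((real n)^2 * (real n - 1)) < 0"
    using assms(2) gain_if_best_Suc_diff[of n j] unfolding x_def by linarith
  then have "x^2 - real j * (2 * x + 1) < 0" using D by (simp add: divide_less_0_iff)
  then have "(x - 1)^2 < (real j + 1) * (2 * x - 1)"
  proof (cases "real j + 1 \<le> 2 * x")
    case True
    then show ?thesis using \<open>x^2 - real j * (2 * x + 1) < 0\<close>
      by (simp add: algebra_simps power2_eq_square)
  next
    case False
    have "2 * x * (2 * x - 1) < (real j + 1) * (2 * x - 1)"
      using False x by (intro mult_strict_right_mono) auto
    moreover have "1 * 1 \<le> x * x" using x by (intro mult_mono) auto
    then have "(x - 1)^2 \<le> 2 * x * (2 * x - 1)" by (simp add: algebra_simps power2_eq_square)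
    ultimately show ?thesis by linarith
  qed
  then have "(real n - real (Suc j) - 1)^2 - real (Suc j) * (2 * (real n - real (Suc j) - 1) + 1) < 0"
    unfolding x_def by (simp add: algebra_simps)
  from divide_neg_pos[OF this D] show ?thesis
    using gain_if_best_Suc_diff[of n "Suc j"] by linarith
qed

lemma gain_if_best_add_gain_if_second:
  assumes "2 \<le> n"
  shows "gain_if_best n k + gain_if_second n k = real k * (real n - real k) / (real n)^2"
proof -
  have "real n - 1 \<noteq> 0" "real n \<noteq> 0" using assms by auto
  then show ?thesis unfolding gain_if_best_def gain_if_second_def
    by (simp add: divide_simps power2_eq_square) (simp add: algebra_simps)
qed

text \<open>The expected payoff, after k rejected interviews, of accepting the first later candidate that
  is best or second best so far.\<close>

definition value_top2 :: "nat \<Rightarrow> nat \<Rightarrow> real" where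
  "value_top2 n = backward_induction n
     (\<lambda>k w. (gain_if_best n k + gain_if_second n k + (real k - 2) * w) / real k) 0"

lemma value_top2_top: "value_top2 n n = 0"
  by (simp add: value_top2_def backward_induction_top)

lemma value_top2_step:
  "k < n \<Longrightarrow> value_top2 n k = (gain_if_best n (Suc k) + gain_if_second n (Suc k) +
     (real k - 1) * value_top2 n (Suc k)) / real (Suc k)"
  by (simp add: value_top2_def backward_induction_step algebra_simps)

definition tail_sum :: "nat \<Rightarrow> nat \<Rightarrow> real" where
  "tail_sum n k = (\<Sum>j \<in> {k..<n}. (real n - real j - 1) / (real j * (real j - 1)))"

lemma tail_sum_top: "tail_sum n n = 0"
  by (simp add: tail_sum_def)

lemma tail_sum_step:
  "k < n \<Longrightarrow> tail_sum n k = tail_sum n (Suc k) + (real n - real k - 1) / (real k * (real k - 1))"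
  by (simp add: tail_sum_def sum.atLeast_Suc_lessThan)

lemma tail_sum_le:
  assumes "2 \<le> k" "k \<le> n"
  shows "tail_sum n k \<le> (real n - real k) * (real n - real k - 1) / ((real k - 1) * (real n - 1))"
  using assms(2,1)
proof (induction k rule: inc_induct)
  case (step j)
  have IH: "tail_sum n (Suc j) \<le> (real n - real j - 1) * (real n - real j - 2) / (real j * (real n - 1))"
    using step.IH step.prems by (simp add: algebra_simps)
  have "(real n - real j) * (real n - real j - 1) / ((real j - 1) * (real n - 1)) -
      ((real n - real j - 1) * (real n - real j - 2) / (real j * (real n - 1)) +
       (real n - real j - 1) / (real j * (real j - 1)))
      = (real n - real j - 1) / (real j * (real n - 1))"
  proof -
    have "real j - 1 > 0" "real j > 0" "real n - 1 > 0" using step by auto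
    then show ?thesis by (simp add: divide_simps) (simp add: algebra_simps)
  qed
  moreover have "(real n - real j - 1) / (real j * (real n - 1)) \<ge> 0"
    using step by (intro divide_nonneg_pos) auto
  ultimately show ?case using IH tail_sum_step[OF step.hyps(2)] by linarith
qed (simp add: tail_sum_top)

lemma value_top2_eq_tail_sum:
  assumes "2 \<le> n" "2 \<le> k" "k \<le> n"
  shows "value_top2 n k = real k * (real k - 1) / (real n)^2 * tail_sum n k"
  using assms(3,2)
proof (induction k rule: inc_induct)
  case (step j)
  define a where "a = tail_sum n (Suc j)"
  have IH: "value_top2 n (Suc j) = real (Suc j) * real j / (real n)^2 * a"
    using step.IH step.prems unfolding a_def by simp
  have "real j - 1 > 0" "real n > 0" using step assms(1) by auto
  then have "(real (Suc j) * (real n - real (Suc j)) / (real n)^2 +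
        (real j - 1) * (real (Suc j) * real j / (real n)^2 * a)) / real (Suc j) =
      real j * (real j - 1) / (real n)^2 * (a + (real n - real j - 1) / (real j * (real j - 1)))"
    by (simp add: divide_simps) (simp add: algebra_simps power2_eq_square)
  then show ?case
    using value_top2_step[OF step.hyps(2)] gain_if_best_add_gain_if_second[OF assms(1), of "Suc j"]
      tail_sum_step[OF step.hyps(2)] IH unfolding a_def by simp
qed (simp add: value_top2_top tail_sum_top)

lemma value_top2_le_gain_if_best:
  assumes "2 \<le> n" "1 \<le> k" "k \<le> n"
  shows "value_top2 n k \<le> gain_if_best n k"
proof (cases "k = 1")
  case True
  have "value_top2 n 1 = (gain_if_best n 2 + gain_if_second n 2) / 2"
    using value_top2_step[of 1 n] assms by (simp add: numeral_2_eq_2)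
  also have "\<dots> = (real n - 2) / (real n)^2"
    using gain_if_best_add_gain_if_second[OF assms(1), of 2] assms(1) by (simp add: divide_simps)
  also have "\<dots> \<le> (real n - 1) / (real n)^2" by (intro divide_right_mono) auto
  also have "\<dots> = gain_if_best n 1"
    using assms(1) unfolding gain_if_best_def by (simp add: power2_eq_square)
  finally show ?thesis using True by simp
next
  case False
  then have k: "2 \<le> k" using assms by simp
  have "value_top2 n k \<le> real k * (real k - 1) / (real n)^2 *
      ((real n - real k) * (real n - real k - 1) / ((real k - 1) * (real n - 1)))"
    unfolding value_top2_eq_tail_sum[OF assms(1) k assms(3)]
    using tail_sum_le[OF k assms(3)] k by (intro mult_left_mono) auto
  also have "\<dots> = real k * ((real n - real k) * (real n - real k - 1)) / ((real n)^2 * (real n - 1))"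
  proof -
    have "real k - 1 > 0" "real n - 1 > 0" using k assms by auto
    then show ?thesis by (simp add: divide_simps)
  qed
  also have "\<dots> \<le> gain_if_best n k"
    unfolding gain_if_best_def power2_eq_square[of "real n - real k"]
    using assms by (intro divide_right_mono mult_left_mono) auto
  finally show ?thesis .
qed

definition second_margin :: "nat \<Rightarrow> nat \<Rightarrow> real" where
  "second_margin n k = (real n - real k) / (real n - 1) - tail_sum n k"

lemma value_top2_le_gain_if_second_iff:
  assumes "2 \<le> n" "2 \<le> k" "k \<le> n"
  shows "value_top2 n k \<le> gain_if_second n k \<longleftrightarrow> second_margin n k \<ge> 0"
proof -
  define P where "P = real k * (real k - 1) / (real n)^2"
  have "real n - 1 > 0" using assms by simp
  then have "gain_if_second n k - value_top2 n k = P * second_margin n k"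
    unfolding value_top2_eq_tail_sum[OF assms] second_margin_def gain_if_second_def P_def
    by (simp add: divide_simps) (simp add: algebra_simps power2_eq_square)
  moreover have "P > 0" using assms unfolding P_def by simp
  ultimately show ?thesis by (smt (verit) zero_le_mult_iff)
qed

lemma second_margin_top: "second_margin n n = 0"
  by (simp add: second_margin_def tail_sum_top)

lemma second_margin_nonneg_Suc:
  assumes "2 \<le> k" "k < n" "second_margin n k \<ge> 0"
  shows "second_margin n (Suc k) \<ge> 0"
proof (rule nonneg_Suc_if_decrease_persists[where lo = 2 and hi = n])
  have diff: "second_margin n (Suc j) - second_margin n j =
      (real n - real j - 1) / (real j * (real j - 1)) - 1 / (real n - 1)" if "j < n" for j
    using that by (simp add: second_margin_def tail_sum_step diff_divide_distrib[symmetric])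
  fix j assume j: "2 \<le> j" "Suc j < n" "second_margin n (Suc j) < second_margin n j"
  have "(real n - real (Suc j) - 1) / (real (Suc j) * (real (Suc j) - 1)) \<le>
      (real n - real j - 1) / (real j * (real j - 1))"
    using j by (intro frac_le mult_mono) auto
  then show "second_margin n (Suc (Suc j)) < second_margin n (Suc j)"
    using j diff[of j] diff[of "Suc j"] by linarith
qed (use assms in \<open>simp_all add: second_margin_top\<close>)

lemma opt_value_0:
  "0 < n \<Longrightarrow> opt_value n 0 = max (gain_if_best n 1) (opt_value n 1)"
  by (simp add: opt_value_step accept_gain_def)

lemma opt_value_step_gains:
  assumes "1 \<le> k" "k < n"
  shows "opt_value n k = (max (gain_if_best n (Suc k)) (opt_value n (Suc k)) +
    max (gain_if_second n (Suc k)) (opt_value n (Suc k)) + (real k - 1) * opt_value n (Suc k)) / real (Suc k)"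
proof -
  let ?V = "opt_value n (Suc k)"
  have "{..k} = insert k (insert (k - 1) {..<k - 1})" "k \<notin> insert (k - 1) {..<k - 1}"
    "k - 1 \<notin> {..<k - 1}" using assms(1) by auto
  moreover have "accept_gain n (Suc k) k = gain_if_best n (Suc k)"
    "accept_gain n (Suc k) (k - 1) = gain_if_second n (Suc k)"
    using assms(1) by (auto simp: accept_gain_def)
  ultimately have "(\<Sum>c \<le> k. max (accept_gain n (Suc k) c) ?V) =
      max (gain_if_best n (Suc k)) ?V + max (gain_if_second n (Suc k)) ?V +
      (\<Sum>c < k - 1. max (accept_gain n (Suc k) c) ?V)"
    by (simp add: add.assoc)
  also have "(\<Sum>c < k - 1. max (accept_gain n (Suc k) c) ?V) = (\<Sum>c < k - 1. ?V)"
    using opt_value_nonneg[of "Suc k" n] assms by (intro sum.cong) (auto simp: accept_gain_def)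
  also have "\<dots> = (real k - 1) * ?V" using assms(1) by (simp add: of_nat_diff)
  finally show ?thesis using opt_value_step[OF assms(2)] by simp
qed

lemma value_top2_le_opt_value:
  assumes "2 \<le> n" "1 \<le> k" "k \<le> n"
  shows "value_top2 n k \<le> opt_value n k"
  using assms(3,2)
proof (induction k rule: inc_induct)
  case (step j)
  have "gain_if_best n (Suc j) + gain_if_second n (Suc j) + (real j - 1) * value_top2 n (Suc j) \<le>
      max (gain_if_best n (Suc j)) (opt_value n (Suc j)) + max (gain_if_second n (Suc j)) (opt_value n (Suc j)) +
      (real j - 1) * opt_value n (Suc j)"
    using step by (intro add_mono mult_left_mono) auto
  then show ?case
    using step by (simp add: value_top2_step opt_value_step_gains divide_right_mono)
qed (simp add: value_top2_top opt_value_top)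

text \<open>The expected payoff, after k rejected interviews, of accepting the first candidate that is
  best so far among interviews k + 1, ..., s, and following value_top2 after interview s.\<close>

definition value_top1 :: "nat \<Rightarrow> nat \<Rightarrow> nat \<Rightarrow> real" where
  "value_top1 n s = backward_induction s
     (\<lambda>k w. (gain_if_best n k + (real k - 1) * w) / real k) (value_top2 n s)"

lemma value_top1_top: "value_top1 n s s = value_top2 n s"
  by (simp add: value_top1_def backward_induction_top)

lemma value_top1_step:
  "k < s \<Longrightarrow> value_top1 n s k = (gain_if_best n (Suc k) + real k * value_top1 n s (Suc k)) / real (Suc k)"
  by (simp add: value_top1_def backward_induction_step)

lemma value_top1_le_opt_value:
  assumes "2 \<le> n" "1 \<le> s" "s \<le> n" "k \<le> s"
  shows "value_top1 n s k \<le> opt_value n k"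
  using assms(4)
proof (induction k rule: inc_induct)
  case base
  then show ?case using value_top2_le_opt_value assms by (simp add: value_top1_top)
next
  case (step j)
  show ?case
  proof (cases "j = 0")
    case True
    then show ?thesis
      using step assms by (simp add: value_top1_step opt_value_0)
  next
    case False
    have "real j * value_top1 n s (Suc j) \<le> real j * opt_value n (Suc j)"
      using step.IH by (intro mult_left_mono) auto
    also have "\<dots> = opt_value n (Suc j) + (real j - 1) * opt_value n (Suc j)"
      by (simp add: algebra_simps)
    finally have "gain_if_best n (Suc j) + real j * value_top1 n s (Suc j) \<le>
        max (gain_if_best n (Suc j)) (opt_value n (Suc j)) + max (gain_if_second n (Suc j)) (opt_value n (Suc j)) +
        (real j - 1) * opt_value n (Suc j)"
      by simp
    then show ?thesis
      using False step assms by (simp add: value_top1_step opt_value_step_gains divide_right_mono)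
  qed
qed

definition best_margin :: "nat \<Rightarrow> nat \<Rightarrow> nat \<Rightarrow> real" where
  "best_margin n s k = (gain_if_best n k - value_top1 n s k) / real k"

lemma best_margin_Suc_diff:
  assumes "1 \<le> k" "k < s"
  shows "best_margin n s (Suc k) - best_margin n s k = (gain_if_best n (Suc k) - gain_if_best n k) / real k"
proof -
  have "real k > 0" using assms by simp
  then show ?thesis
    unfolding best_margin_def value_top1_step[OF assms(2)]
    by (simp add: divide_simps) (simp add: algebra_simps)
qed

lemma best_margin_nonneg_Suc:
  assumes "2 \<le> n" "s \<le> n" "1 \<le> k" "k < s" "best_margin n s k \<ge> 0"
  shows "best_margin n s (Suc k) \<ge> 0"
proof (rule nonneg_Suc_if_decrease_persists[where lo = 1 and hi = s])
  show "best_margin n s s \<ge> 0"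
    using value_top2_le_gain_if_best[of n s] assms
    unfolding best_margin_def value_top1_top by simp
  fix j assume j: "1 \<le> j" "Suc j < s" "best_margin n s (Suc j) < best_margin n s j"
  then have "(gain_if_best n (Suc j) - gain_if_best n j) / real j < 0"
    using best_margin_Suc_diff[of j s n] by simp
  then have "gain_if_best n (Suc j) < gain_if_best n j"
    using j(1) by (simp add: divide_less_0_iff)
  then have "gain_if_best n (Suc (Suc j)) < gain_if_best n (Suc j)"
    using j assms by (intro gain_if_best_decrease_persists) auto
  then have "(gain_if_best n (Suc (Suc j)) - gain_if_best n (Suc j)) / real (Suc j) < 0"
    by (simp add: divide_less_0_iff)
  then show "best_margin n s (Suc (Suc j)) < best_margin n s (Suc j)"
    using best_margin_Suc_diff[of "Suc j" s n] j by simp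
qed (use assms in auto)

context
  fixes n r s :: nat
  assumes n: "2 \<le> n" and s: "1 \<le> s" "s < n" and rs: "r \<le> s"
    and second_late: "\<And>k. s < k \<Longrightarrow> k \<le> n \<Longrightarrow> second_margin n k \<ge> 0"
    and second_early: "\<And>k. 2 \<le> k \<Longrightarrow> k \<le> s \<Longrightarrow> second_margin n k < 0"
    and best_late: "\<And>k. r < k \<Longrightarrow> k \<le> s \<Longrightarrow> best_margin n s k \<ge> 0"
    and best_early: "\<And>k. 1 \<le> k \<Longrightarrow> k \<le> r \<Longrightarrow> best_margin n s k < 0"
begin

lemma opt_value_eq_value_top2:
  assumes "s \<le> k" "k \<le> n"
  shows "opt_value n k = value_top2 n k"
  using assms(2,1)
proof (induction k rule: inc_induct)
  case (step j)
  have "opt_value n (Suc j) \<le> gain_if_best n (Suc j)" "opt_value n (Suc j) \<le> gain_if_second n (Suc j)"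
    using step value_top2_le_gain_if_best[OF n] value_top2_le_gain_if_second_iff[OF n, of "Suc j"]
      second_late[of "Suc j"] s by auto
  then show ?case using step s by (simp add: opt_value_step_gains value_top2_step)
qed (simp add: opt_value_top value_top2_top)

lemma opt_value_eq_value_top1:
  assumes "r \<le> k" "k \<le> s"
  shows "opt_value n k = value_top1 n s k"
  using assms(2,1)
proof (induction k rule: inc_induct)
  case base
  then show ?case using opt_value_eq_value_top2 s by (simp add: value_top1_top)
next
  case (step j)
  have best: "opt_value n (Suc j) \<le> gain_if_best n (Suc j)"
    using best_late[of "Suc j"] step by (simp add: best_margin_def zero_le_divide_iff)
  show ?case
  proof (cases "j = 0")
    case True
    then show ?thesis using best step s by (simp add: opt_value_0 value_top1_step)
  next
    case False
    have "gain_if_second n (Suc j) < value_top2 n (Suc j)"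
      using value_top2_le_gain_if_second_iff[OF n, of "Suc j"] second_early[of "Suc j"] False step s
      by auto
    then have "gain_if_second n (Suc j) \<le> opt_value n (Suc j)"
      using value_top2_le_opt_value[OF n, of "Suc j"] step s by auto
    then show ?thesis
      using best False step s by (simp add: opt_value_step_gains value_top1_step algebra_simps)
  qed
qed

lemma accept_best_so_far_optimal:
  assumes "1 \<le> k" "k \<le> n"
  shows "if r < k then opt_value n k \<le> gain_if_best n k else gain_if_best n k \<le> opt_value n k"
proof (cases "r < k")
  case True
  show ?thesis
  proof (cases "k \<le> s")
    case True
    then show ?thesis
      using \<open>r < k\<close> opt_value_eq_value_top1 best_late[of k]
      by (simp add: best_margin_def zero_le_divide_iff)
  next
    case False
    then show ?thesis
      using \<open>r < k\<close> opt_value_eq_value_top2 value_top2_le_gain_if_best[OF n] assms by simp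
  qed
next
  case False
  then have "gain_if_best n k < value_top1 n s k"
    using best_early[of k] assms by (simp add: best_margin_def divide_less_0_iff)
  then show ?thesis
    using False value_top1_le_opt_value[OF n s(1) _, of k] s rs by simp
qed

lemma accept_second_so_far_optimal:
  assumes "2 \<le> k" "k \<le> n"
  shows "if s < k then opt_value n k \<le> gain_if_second n k else gain_if_second n k \<le> opt_value n k"
proof (cases "s < k")
  case True
  then show ?thesis
    using opt_value_eq_value_top2 value_top2_le_gain_if_second_iff[OF n assms] second_late assms by simp
next
  case False
  then have "gain_if_second n k < value_top2 n k"
    using value_top2_le_gain_if_second_iff[OF n assms] second_early[of k] assms by auto
  then show ?thesis
    using False value_top2_le_opt_value[OF n, of k] assms by simp
qed

lemma threshold_strategy_acts_optimally: "acts_optimally n (threshold_strategy r s)"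
  unfolding acts_optimally_def
proof (intro allI impI ballI)
  fix m q assume m: "m < n" and q: "q \<in> orders (Suc m)"
  let ?k = "Suc m"
  have "q \<noteq> []" using length_orders[OF q] by auto
  then have "last q \<in> set q" "q ! (length q - 1) = last q" by (simp_all add: last_conv_nth)
  then have c: "last q \<le> m" "q ! (?k - 1) = last q"
    using q length_orders[OF q] unfolding orders_def by auto
  have accept: "threshold_strategy r s q \<longleftrightarrow>
      (last q = m \<and> r < ?k) \<or> (Suc (last q) = m \<and> s < ?k)"
    unfolding threshold_strategy_def Let_def length_orders[OF q] c(2) using c(1) rs by auto
  consider "last q = m" | "Suc (last q) = m" | "Suc (Suc (last q)) < ?k" using c(1) by linarith
  then show "if threshold_strategy r s q then opt_value n ?k \<le> accept_gain n ?k (last q)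
      else accept_gain n ?k (last q) \<le> opt_value n ?k"
  proof cases
    case 1
    then show ?thesis
      using accept_best_so_far_optimal[of ?k] m accept by (simp add: accept_gain_def)
  next
    case 2
    then show ?thesis
      using accept_second_so_far_optimal[of ?k] m accept by (auto simp: accept_gain_def)
  next
    case 3
    then show ?thesis
      using accept opt_value_nonneg[of ?k n] m by (simp add: accept_gain_def)
  qed
qed

end

lemma exists_threshold_strategy_acting_optimally:
  "\<exists>r s. r \<le> s \<and> s \<le> n \<and> acts_optimally n (threshold_strategy r s)"
proof (cases "2 \<le> n")
  case True
  obtain s where s: "2 \<le> Suc s" "s \<le> n"
    and second_late: "\<forall>k. s < k \<and> k \<le> n \<longrightarrow> second_margin n k \<ge> 0"
    and second_early: "\<forall>k. 2 \<le> k \<and> k \<le> s \<longrightarrow> \<not> second_margin n k \<ge> 0"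
    using upward_closed_threshold[of 2 n "\<lambda>k. second_margin n k \<ge> 0"] second_margin_nonneg_Suc True
    by auto
  have "s \<noteq> n" using second_early True second_margin_top[of n] by auto
  then have "s < n" using s by simp
  obtain r where "r \<le> s"
    and best_late: "\<forall>k. r < k \<and> k \<le> s \<longrightarrow> best_margin n s k \<ge> 0"
    and best_early: "\<forall>k. 1 \<le> k \<and> k \<le> r \<longrightarrow> \<not> best_margin n s k \<ge> 0"
    using upward_closed_threshold[of 1 s "\<lambda>k. best_margin n s k \<ge> 0"]
      best_margin_nonneg_Suc[OF True] s by auto
  have "acts_optimally n (threshold_strategy r s)"
    by (rule threshold_strategy_acts_optimally)
      (use True s \<open>s < n\<close> \<open>r \<le> s\<close> second_late second_early best_late best_early in auto)
  then show ?thesis using \<open>r \<le> s\<close> s by blast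
next
  case False
  have "opt_value n (Suc m) = 0" "accept_gain n (Suc m) c = 0" if "m < n" for m c
  proof -
    have "Suc m = n" using that False by simp
    then show "opt_value n (Suc m) = 0" "accept_gain n (Suc m) c = 0"
      by (simp_all add: opt_value_top accept_gain_def gain_if_best_def gain_if_second_def)
  qed
  then have "acts_optimally n (threshold_strategy 0 0)" by (simp add: acts_optimally_def)
  then show ?thesis by blast
qed

theorem theorem8:
  fixes n :: nat
  shows "\<exists>r s. r \<le> s \<and> s \<le> n \<and>
           (\<forall>S :: strategy. expected_payoff n S \<le> expected_payoff n (threshold_strategy r s))"
proof -
  obtain r s where "r \<le> s" "s \<le> n" and opt: "acts_optimally n (threshold_strategy r s)"
    using exists_threshold_strategy_acting_optimally by blast
  have "expected_payoff n S \<le> expected_payoff n (threshold_strategy r s)" for S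
    using expected_payoff_le_opt_value[of n S] expected_payoff_eq_opt_value[OF opt] by simp
  then show ?thesis using \<open>r \<le> s\<close> \<open>s \<le> n\<close> by blast
qed
end
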